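(* Let $\mathbb{L}$ be a Markov Logic Network of signature $\sigma$ and let $\Pi_{\mathbb{L}}$ be the $\mathrm{LP}^{\mathrm{MLN}}$ program obtained from (the ground instance of) $\mathbb{L}$ by turning each weighted formula $w:F$ into the weighted rule $w:\ \bot\leftarrow\neg F$ and adding the weighted rule $w:\ A\leftarrow\neg\neg A$ for every ground atom $A$ of $\sigma$, where $w$ is an arbitrary real number. Then for every Herbrand interpretation $I$ of $\sigma$, $P_{\mathbb{L}}(I)=P_{\Pi_{\mathbb{L}}}(I)$.
   Context: $\sigma$ is a first-order signature with no function constants of positive arity; Herbrand interpretations are identified with sets of ground atoms. A Markov Logic Network (MLN) $\mathbb{L}$ is a finite set of weighted formulas $w:F$, $F$ a first-order formula and $w$ a real number or the symbol $\alpha$ (hard weight), identified with its ground instance (each ground instance of $F$, a propositional combination of ground atoms, inherits $w$). For an interpretation $I$, $\mathbb{L}_I$ is the set of $w:F\in\mathbb{L}$ with $I\models F$, $W_{\mathbb{L}}(I)=\exp(\sum_{w:F\in\mathbb{L}_I}w)$, and $P_{\mathbb{L}}(I)=\lim_{\alpha\to\infty}W_{\mathbb{L}}(I)/\sum_J W_{\mathbb{L}}(J)$, the sum over all Herbrand interpretations $J$, with $\alpha$ treated as a real parameter. A formula is negative if every occurrence of every atom is in the scope of negation. A rule has the form $A\leftarrow B\wedge N$ ($A$ a possibly empty disjunction of atoms, $B$ a conjunction of atoms, $N$ a negative formula), identified with $B\wedge N\rightarrow A$. For a ground program $\Pi$, the reduct $\Pi^I$ consists of $A\leftarrow B$ for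 all rules $A\leftarrow B\wedge N$ with $I\models N$; $I$ is a stable model of $\Pi$ if it is a minimal model of $\Pi^I$. An $\mathrm{LP}^{\mathrm{MLN}}$ program is a finite set of weighted rules $w:R$ ($w$ real or $\alpha$); $\Pi_I=\{w:R\in\Pi\mid I\models R\}$, $\overline{\Pi_I}$ its unweighted rules; $\mathrm{SM}[\Pi]=\{I\mid I\text{ is a stable model of }\overline{\Pi_I}\}$; $W_\Pi(I)=\exp(\sum_{w:R\in\Pi_I}w)$ if $I\in\mathrm{SM}[\Pi]$, else $0$; $P_\Pi(I)=\lim_{\alpha\to\infty}W_\Pi(I)/\sum_{J\in\mathrm{SM}[\Pi]}W_\Pi(J)$. *)

theory Defs
  imports Complex_Main
begin

text \<open>Since sigma has no function constants of positive arity, the Herbrand base is the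
  set of ground atoms; we take it to be a finite type 'a.\<close>

datatype 'a form =
    Atom 'a
  | Bot
  | Top
  | Neg "'a form"
  | Conj "'a form" "'a form"
  | Disj "'a form" "'a form"
  | Imp "'a form" "'a form"

fun sat :: "'a set \<Rightarrow> 'a form \<Rightarrow> bool" where
  "sat I (Atom a) = (a \<in> I)"
| "sat I Bot = False"
| "sat I Top = True"
| "sat I (Neg F) = (\<not> sat I F)"
| "sat I (Conj F G) = (sat I F \<and> sat I G)"
| "sat I (Disj F G) = (sat I F \<or> sat I G)"
| "sat I (Imp F G) = (sat I F \<longrightarrow> sat I G)"

fun negative :: "'a form \<Rightarrow> bool" where
  "negative (Atom a) = False"
| "negative Bot = True"
| "negative Top = True"
| "negative (Neg F) = True"
| "negative (Conj F G) = (negative F \<and> negative G)"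
| "negative (Disj F G) = (negative F \<and> negative G)"
| "negative (Imp F G) = (negative F \<and> negative G)"

datatype weight = Soft real | Hard

fun wval :: "real \<Rightarrow> weight \<Rightarrow> real" where
  "wval \<alpha> (Soft r) = r"
| "wval \<alpha> Hard = \<alpha>"

text \<open>A (ground) Markov Logic Network: a finite list of weighted ground formulas
  (list, so that repeated ground instances are counted with multiplicity).\<close>
type_synonym 'a mln = "(weight \<times> 'a form) list"

definition mln_W :: "real \<Rightarrow> 'a mln \<Rightarrow> 'a set \<Rightarrow> real" where
  "mln_W \<alpha> L I = exp (sum_list [wval \<alpha> w. (w, F) \<leftarrow> L, sat I F])"

definition mln_P :: "'a::finite mln \<Rightarrow> 'a set \<Rightarrow> real" where
  "mln_P L I = Lim at_top (\<lambda>\<alpha>. mln_W \<alpha> L I / (\<Sum>J\<in>(UNIV :: 'a set set). mln_W \<alpha> L J))"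

text \<open>Rules  A <- B /\ N : head = list of atoms (disjunction), positive body = list of
  atoms (conjunction), negative part N (a formula, negative in a well-formed rule).\<close>
datatype 'a rule = Rule (head: "'a list") (pbody: "'a list") (nbody: "'a form")

definition sat_rule :: "'a set \<Rightarrow> 'a rule \<Rightarrow> bool" where
  "sat_rule I r = ((set (pbody r) \<subseteq> I \<and> sat I (nbody r)) \<longrightarrow> (\<exists>a\<in>set (head r). a \<in> I))"

definition reduct :: "'a rule set \<Rightarrow> 'a set \<Rightarrow> ('a list \<times> 'a list) set" where
  "reduct R I = {(head r, pbody r) | r. r \<in> R \<and> sat I (nbody r)}"

definition sat_pos :: "'a set \<Rightarrow> ('a list \<times> 'a list) \<Rightarrow> bool" where
  "sat_pos J hb = (set (snd hb) \<subseteq> J \<longrightarrow> (\<exists>a\<in>set (fst hb). a \<in> J))"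

definition stable_model :: "'a rule set \<Rightarrow> 'a set \<Rightarrow> bool" where
  "stable_model R I =
     ((\<forall>p\<in>reduct R I. sat_pos I p) \<and>
      \<not> (\<exists>J. J \<subset> I \<and> (\<forall>p\<in>reduct R I. sat_pos J p)))"

type_synonym 'a lpmln = "(weight \<times> 'a rule) list"

definition sat_rules :: "'a lpmln \<Rightarrow> 'a set \<Rightarrow> 'a rule set" where
  "sat_rules \<Pi> I = {r. \<exists>w. (w, r) \<in> set \<Pi> \<and> sat_rule I r}"

definition SM :: "'a lpmln \<Rightarrow> 'a set set" where
  "SM \<Pi> = {I. stable_model (sat_rules \<Pi> I) I}"

definition lp_W :: "real \<Rightarrow> 'a lpmln \<Rightarrow> 'a set \<Rightarrow> real" where
  "lp_W \<alpha> \<Pi> I = (if I \<in> SM \<Pi> then exp (sum_list [wval \<alpha> w. (w, r) \<leftarrow> \<Pi>, sat_rule I r]) else 0)"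

definition lp_P :: "'a lpmln \<Rightarrow> 'a set \<Rightarrow> real" where
  "lp_P \<Pi> I = Lim at_top (\<lambda>\<alpha>. lp_W \<alpha> \<Pi> I / (\<Sum>J\<in>SM \<Pi>. lp_W \<alpha> \<Pi> J))"

definition mln_to_lp :: "real \<Rightarrow> 'a::finite mln \<Rightarrow> 'a lpmln" where
  "mln_to_lp w' L =
     [(w, Rule [] [] (Neg F)). (w, F) \<leftarrow> L] @
     [(Soft w', Rule [A] [] (Neg (Neg (Atom A)))). A \<leftarrow> (SOME xs. distinct xs \<and> set xs = (UNIV :: 'a set))]"

end

theory Submission
  imports Defs
begin

text \<open>Every interpretation I is a stable model of the rules of \<Pi>_L it satisfies: the
  constraints \<bottom> \<leftarrow> \<not>F have empty heads and drop out of the reduct, while the choice rules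
  A \<leftarrow> \<not>\<not>A, satisfied by every I, contribute exactly the facts A \<in> I, whose only model below I
  is I itself. Since a constraint \<bottom> \<leftarrow> \<not>F is satisfied exactly when F is, the weight of I
  under \<Pi>_L is its MLN weight times the constant exp (w \<cdot> |atoms|), which cancels upon
  normalisation.\<close>

lemma sat_rule_constraint [simp]: "sat_rule I (Rule [] [] (Neg F)) = sat I F"
  by (simp add: sat_rule_def)

lemma sat_rule_choice [simp]: "sat_rule I (Rule [A] [] (Neg (Neg (Atom A))))"
  by (simp add: sat_rule_def)

lemma stable_model_if_reduct_facts:
  assumes "reduct R I = {([A], []) | A. A \<in> I}"
  shows "stable_model R I"
proof -
  have "J = I" if "J \<subseteq> I" and "\<forall>p\<in>reduct R I. sat_pos J p" for J
  proof -
    have "A \<in> J" if "A \<in> I" for A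
      using \<open>\<forall>p\<in>reduct R I. sat_pos J p\<close> [rule_format, of "([A], [])"] that assms
      by (auto simp: sat_pos_def)
    then show ?thesis using \<open>J \<subseteq> I\<close> by blast
  qed
  moreover have "\<forall>p\<in>reduct R I. sat_pos I p"
    using assms by (auto simp: sat_pos_def)
  ultimately show ?thesis
    unfolding stable_model_def by (metis psubset_eq)
qed

definition atom_list :: "'a::finite list" where
  "atom_list = (SOME xs. distinct xs \<and> set xs = UNIV)"

lemma distinct_atom_list: "distinct atom_list" and set_atom_list: "set atom_list = UNIV"
proof -
  have "distinct atom_list \<and> set atom_list = UNIV"
    unfolding atom_list_def
    by (metis (mono_tags, lifting) finite_distinct_list finite_UNIV someI_ex)
  then show "distinct atom_list" and "set atom_list = UNIV" by blast+
qed

lemma length_atom_list: "length (atom_list :: 'a::finite list) = card (UNIV :: 'a set)"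
  using distinct_card [of "atom_list :: 'a list"] by (simp add: distinct_atom_list set_atom_list)

lemma mln_to_lp_atom_list:
  "mln_to_lp w L =
     [(v, Rule [] [] (Neg F)). (v, F) \<leftarrow> L] @
     [(Soft w, Rule [A] [] (Neg (Neg (Atom A)))). A \<leftarrow> atom_list]"
  by (simp add: mln_to_lp_def atom_list_def)

lemma reduct_mln_to_lp:
  "reduct (sat_rules (mln_to_lp w L) I) I = {([A], []) | A. A \<in> I}" (is "?reduct = ?facts")
proof (intro set_eqI iffI)
  fix p
  assume "p \<in> ?reduct"
  then show "p \<in> ?facts"
    by (auto simp: reduct_def sat_rules_def mln_to_lp_atom_list)
next
  fix p
  assume "p \<in> ?facts"
  then obtain A where "p = ([A], [])" and "A \<in> I"
    by blast
  moreover have "Rule [A] [] (Neg (Neg (Atom A))) \<in> sat_rules (mln_to_lp w L) I"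
    by (auto simp: sat_rules_def mln_to_lp_atom_list set_atom_list)
  ultimately show "p \<in> ?reduct"
    by (force simp: reduct_def)
qed

lemma SM_mln_to_lp: "SM (mln_to_lp w L) = UNIV"
  by (auto simp: SM_def reduct_mln_to_lp intro: stable_model_if_reduct_facts)

lemma weight_sum_mln_to_lp:
  fixes L :: "'a::finite mln"
  shows "sum_list [wval \<alpha> v. (v, r) \<leftarrow> mln_to_lp w L, sat_rule I r]
    = sum_list [wval \<alpha> v. (v, F) \<leftarrow> L, sat I F] + w * card (UNIV :: 'a set)"
proof -
  let ?weights = "\<lambda>\<Pi> :: 'a lpmln. [wval \<alpha> v. (v, r) \<leftarrow> \<Pi>, sat_rule I r]"
  let ?constraints = "[(v, Rule [] [] (Neg F)). (v, F) \<leftarrow> L]"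
  let ?choices = "[(Soft w, Rule [A] [] (Neg (Neg (Atom A)))). A \<leftarrow> atom_list]"
  have "sum_list (?weights ?constraints) = sum_list [wval \<alpha> v. (v, F) \<leftarrow> L, sat I F]"
    by (induction L) auto
  moreover have "sum_list (?weights [(Soft w, Rule [A] [] (Neg (Neg (Atom A)))). A \<leftarrow> xs])
      = w * length xs" for xs :: "'a list"
    by (induction xs) (auto simp: algebra_simps)
  moreover have "?weights (mln_to_lp w L) = ?weights ?constraints @ ?weights ?choices"
    by (simp add: mln_to_lp_atom_list)
  ultimately show ?thesis
    by (simp only: sum_list_append length_atom_list)
qed

lemma lp_W_mln_to_lp:
  fixes L :: "'a::finite mln"
  shows "lp_W \<alpha> (mln_to_lp w L) I = exp (w * card (UNIV :: 'a set)) * mln_W \<alpha> L I"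
  by (simp add: lp_W_def mln_W_def SM_mln_to_lp weight_sum_mln_to_lp exp_add)

theorem theorem2:
  fixes L :: "'a::finite mln" and w :: real and I :: "'a set"
  shows "mln_P L I = lp_P (mln_to_lp w L) I"
proof -
  have "lp_W \<alpha> (mln_to_lp w L) I / (\<Sum>J\<in>SM (mln_to_lp w L). lp_W \<alpha> (mln_to_lp w L) J)
      = mln_W \<alpha> L I / (\<Sum>J\<in>UNIV. mln_W \<alpha> L J)" for \<alpha>
    by (simp add: SM_mln_to_lp lp_W_mln_to_lp sum_distrib_left [symmetric])
  then show ?thesis
    by (simp add: mln_P_def lp_P_def)
qed

end
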